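(* Let $\nu\in\mathcal{P}_2(\mathbb{R}^2)$, $\gamma\in\Gamma(\nu)$, $\mu$ its $x$-marginal, and $G\in\mathfrak{M}$ such that $$\int c(x,y)\,d\gamma\le\int\phi_G(y)\,d\nu.$$ Then equality holds in this inequality, $\gamma$ is an optimal plan (a minimizer of $\int c\,d\zeta$ over $\zeta\in\Gamma(\nu)$), $G\supset\operatorname{supp}\mu$, and $$c(x,y)=\phi_G(y)=\min_{r\in G}c(r,y),\qquad(x,y)\in\operatorname{supp}\gamma.$$
   Context: $c(x,y)=(x_1-y_1)(x_2-y_2)$ for $x,y\in\mathbb{R}^2$. $\mathcal{P}_2(\mathbb{R}^d)$: Borel probability measures with finite second moment. $\Gamma(\nu)$: the set of $\gamma\in\mathcal{P}_2(\mathbb{R}^2\times\mathbb{R}^2)$ (points $(x,y)$) with $y$-marginal $\nu$ and $\gamma(y|x)=x$ (conditional expectation of $y$ given $x$ equals $x$, $\gamma$-a.s.). $\mathfrak{M}$: family of maximal monotone sets in $\mathbb{R}^2$ (monotone: $c(r,s)\ge0$ for all $r,s\in G$; maximal: not a proper subset of a monotone set). $\phi_G(y)=\inf_{x\in G}c(x,y)$. $\operatorname{supp}$ is the support. *)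

theory Defs
  imports "HOL-Probability.Probability"
begin

type_synonym pt = "real \<times> real"

definition cost :: "pt \<Rightarrow> pt \<Rightarrow> real" where
  "cost x y = (fst x - fst y) * (snd x - snd y)"

definition P2 :: "'a::euclidean_space measure \<Rightarrow> bool" where
  "P2 M \<longleftrightarrow> prob_space M \<and> sets M = sets borel \<and> integrable M (\<lambda>z. (norm z)\<^sup>2)"

text \<open>Gamma(nu): martingale couplings with second marginal nu. The condition
  E[y | x] = x is expressed by its defining property: for every Borel set A,
  the integral of 1_A(x) (y - x) vanishes.\<close>
definition Gamma :: "pt measure \<Rightarrow> (pt \<times> pt) measure set" where
  "Gamma \<nu> = {\<gamma>. P2 \<gamma> \<and> distr \<gamma> borel snd = \<nu> \<and>
      (\<forall>A \<in> sets (borel :: pt measure).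
         (\<integral>z. indicator A (fst z) *\<^sub>R (snd z - fst z) \<partial>\<gamma>) = 0)}"

definition monotone_set :: "pt set \<Rightarrow> bool" where
  "monotone_set G \<longleftrightarrow> (\<forall>r\<in>G. \<forall>s\<in>G. cost r s \<ge> 0)"

definition maximal_monotone :: "pt set \<Rightarrow> bool" where
  "maximal_monotone G \<longleftrightarrow> monotone_set G \<and>
     (\<forall>H. monotone_set H \<and> G \<subseteq> H \<longrightarrow> H = G)"

definition phi :: "pt set \<Rightarrow> pt \<Rightarrow> ereal" where
  "phi G y = (INF x\<in>G. ereal (cost x y))"

definition ext_integral :: "'a measure \<Rightarrow> ('a \<Rightarrow> ereal) \<Rightarrow> ereal" where
  "ext_integral M f =
     enn2ereal (\<integral>\<^sup>+x. e2ennreal (f x) \<partial>M) - enn2ereal (\<integral>\<^sup>+x. e2ennreal (- f x) \<partial>M)"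

definition msupport :: "'a::topological_space measure \<Rightarrow> 'a set" where
  "msupport M = {x. \<forall>U. open U \<and> x \<in> U \<longrightarrow> emeasure M U > 0}"

end

theory Submission
  imports Defs
begin

text \<open>
  In the rotated coordinates \<open>u = x1 + x2\<close>, \<open>v = x2 - x1\<close> the cost is \<open>(du^2 - dv^2) / 4\<close>, so a
  set is monotone iff \<open>v\<close> is a 1-Lipschitz function of \<open>u\<close> on it, and by a one-dimensional
  Helly argument a maximal monotone set \<open>G\<close> is the graph \<open>v = f u\<close> of a 1-Lipschitz \<open>f\<close> on all
  of \<open>\<real>\<close>. Moving \<open>x\<close> in the \<open>v\<close>-direction onto \<open>G\<close>, by \<open>\<delta>(x) = (f(u) - v) / 2\<close>, gives
  \<open>c(proj x, y) = c(x, y) - \<delta>(x)^2 + \<delta>(x) (v(y) - v(x))\<close>, and the last term integrates to zero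
  against every martingale coupling. As \<open>\<phi>_G(y) \<le> c(proj x, y)\<close>, this gives
  \<open>\<integral>\<phi>_G d\<nu> \<le> \<integral>c d\<zeta> - \<integral>\<delta>^2 d\<zeta>\<close> for all \<open>\<zeta> \<in> \<Gamma>(\<nu>)\<close>, so the hypothesis forces equality,
  optimality of \<open>\<gamma>\<close> and \<open>\<delta> = 0\<close> \<open>\<gamma>\<close>-a.e. Bounding \<open>\<phi>_G(y)\<close> instead by \<open>min (c(proj x, y)) (c(r, y))\<close>
  for a fixed \<open>r \<in> G\<close> shows \<open>c(x, y) \<le> c(r, y)\<close> \<open>\<gamma>\<close>-a.e. Both a.e. statements concern closed
  sets, so they hold on the supports.
\<close>

section \<open>Maximal monotone sets are Lipschitz graphs\<close>

abbreviation ucoord :: "pt \<Rightarrow> real" where "ucoord p \<equiv> fst p + snd p"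
abbreviation vcoord :: "pt \<Rightarrow> real" where "vcoord p \<equiv> snd p - fst p"

lemma cost_rotated: "cost r s = ((ucoord r - ucoord s)\<^sup>2 - (vcoord r - vcoord s)\<^sup>2) / 4"
  unfolding cost_def by (simp add: power2_eq_square algebra_simps)

lemma cost_commute: "cost r s = cost s r"
  unfolding cost_def by (simp add: algebra_simps)

lemma cost_nonneg_iff: "0 \<le> cost r s \<longleftrightarrow> \<bar>vcoord r - vcoord s\<bar> \<le> \<bar>ucoord r - ucoord s\<bar>"
  unfolding cost_rotated abs_le_square_iff by simp

lemma monotone_set_insert:
  "monotone_set (insert q G) \<longleftrightarrow> monotone_set G \<and> (\<forall>p\<in>G. 0 \<le> cost q p)"
  unfolding monotone_set_def using cost_commute by (auto simp: cost_def[of q q])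

lemma monotone_set_extend:
  assumes mono: "monotone_set G" and "G \<noteq> {}"
  obtains q where "ucoord q = t" "monotone_set (insert q G)"
proof -
  have intervals_meet: "vcoord q - \<bar>t - ucoord q\<bar> \<le> vcoord p + \<bar>t - ucoord p\<bar>"
    if "p \<in> G" "q \<in> G" for p q
    using mono that cost_nonneg_iff[of q p] unfolding monotone_set_def by auto
  obtain p0 where "p0 \<in> G" using \<open>G \<noteq> {}\<close> by blast
  \<comment> \<open>The intervals \<open>[v p - |t - u p|, v p + |t - u p|]\<close> meet pairwise, so the supremum of their
    left ends lies in all of them; it is the \<open>v\<close>-coordinate of the new point.\<close>
  define w where "w = (SUP p\<in>G. vcoord p - \<bar>t - ucoord p\<bar>)"
  have bdd: "bdd_above ((\<lambda>p. vcoord p - \<bar>t - ucoord p\<bar>) ` G)"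
    using intervals_meet[OF \<open>p0 \<in> G\<close>] by (rule bdd_aboveI2)
  have w_between: "\<bar>w - vcoord p\<bar> \<le> \<bar>t - ucoord p\<bar>" if "p \<in> G" for p
  proof -
    have "vcoord p - \<bar>t - ucoord p\<bar> \<le> w"
      unfolding w_def using that bdd by (rule cSUP_upper)
    moreover have "w \<le> vcoord p + \<bar>t - ucoord p\<bar>"
      unfolding w_def using \<open>G \<noteq> {}\<close> intervals_meet[OF that] by (rule cSUP_least)
    ultimately show ?thesis by linarith
  qed
  define q where "q = ((t - w) / 2, (t + w) / 2)"
  have "ucoord q = t" "vcoord q = w" by (simp_all add: q_def field_simps)
  with w_between have "\<forall>p\<in>G. 0 \<le> cost q p"
    by (simp add: cost_nonneg_iff abs_minus_commute)
  with mono \<open>ucoord q = t\<close> show thesis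
    using that monotone_set_insert by blast
qed

lemma maximal_monotone_ucoord_surj:
  assumes "maximal_monotone G"
  shows "\<exists>p\<in>G. ucoord p = t"
proof -
  have mono: "monotone_set G" using assms unfolding maximal_monotone_def by blast
  have "G \<noteq> {}"
  proof
    assume "G = {}"
    moreover have "monotone_set {(0, 0)}" unfolding monotone_set_def cost_def by simp
    ultimately show False using assms unfolding maximal_monotone_def by blast
  qed
  then obtain q where "ucoord q = t" "monotone_set (insert q G)"
    using monotone_set_extend[OF mono] by blast
  then show ?thesis using assms unfolding maximal_monotone_def by blast
qed

lemma monotone_set_ucoord_inj:
  assumes "monotone_set G" "p \<in> G" "q \<in> G" "ucoord p = ucoord q"
  shows "p = q"
proof -
  have "\<bar>vcoord p - vcoord q\<bar> \<le> \<bar>ucoord p - ucoord q\<bar>"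
    using assms(1-3) cost_nonneg_iff unfolding monotone_set_def by blast
  with assms(4) show ?thesis by (simp add: prod_eq_iff)
qed

lemma maximal_monotone_graph:
  assumes "maximal_monotone G"
  obtains f :: "real \<Rightarrow> real"
  where "1-lipschitz_on UNIV f" "G = {p. vcoord p = f (ucoord p)}"
proof -
  have mono: "monotone_set G" using assms unfolding maximal_monotone_def by blast
  define P where "P t = (SOME p. p \<in> G \<and> ucoord p = t)" for t
  have P: "P t \<in> G" "ucoord (P t) = t" for t
    using someI_ex[OF maximal_monotone_ucoord_surj[OF assms, of t, unfolded Bex_def]]
    unfolding P_def by blast+
  define f where "f t = vcoord (P t)" for t
  have "1-lipschitz_on UNIV f"
    unfolding lipschitz_on_def dist_real_def f_def
    using mono P cost_nonneg_iff unfolding monotone_set_def by (metis mult_1 order.refl zero_le_one)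
  moreover have "G = {p. vcoord p = f (ucoord p)}"
  proof safe
    fix p assume "p \<in> G"
    then have "P (ucoord p) = p" using monotone_set_ucoord_inj[OF mono] P by metis
    then show "vcoord p = f (ucoord p)" unfolding f_def by simp
  next
    fix a b :: real assume "vcoord (a, b) = f (ucoord (a, b))"
    then have "P (a + b) = (a, b)" using P(2)[of "a + b"] unfolding f_def by (simp add: prod_eq_iff)
    then show "(a, b) \<in> G" using P(1) by metis
  qed
  ultimately show thesis using that by blast
qed

definition graph_gap :: "(real \<Rightarrow> real) \<Rightarrow> pt \<Rightarrow> real" where
  "graph_gap f x = (f (ucoord x) - vcoord x) / 2"

definition graph_proj :: "(real \<Rightarrow> real) \<Rightarrow> pt \<Rightarrow> pt" where
  "graph_proj f x = (fst x - graph_gap f x, snd x + graph_gap f x)"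

lemma graph_proj_in_graph: "graph_proj f x \<in> {p. vcoord p = f (ucoord p)}"
  unfolding graph_proj_def graph_gap_def by simp

lemma graph_gap_eq_0_iff: "graph_gap f x = 0 \<longleftrightarrow> vcoord x = f (ucoord x)"
  unfolding graph_gap_def by auto

lemma cost_graph_proj:
  "cost (graph_proj f x) y = cost x y - (graph_gap f x)\<^sup>2 + graph_gap f x * (vcoord y - vcoord x)"
  unfolding graph_proj_def cost_def by (simp add: power2_eq_square algebra_simps)

lemma continuous_on_graph_gap:
  assumes "continuous_on UNIV f"
  shows "continuous_on UNIV (graph_gap f)"
proof -
  have "continuous_on UNIV (\<lambda>x::pt. f (ucoord x))"
    by (rule continuous_on_compose2[OF assms]) (intro continuous_intros, simp)
  then show ?thesis unfolding graph_gap_def by (intro continuous_intros) auto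
qed

lemma abs_graph_gap_le:
  assumes "1-lipschitz_on UNIV f"
  shows "\<bar>graph_gap f x\<bar> \<le> \<bar>f 0\<bar> + \<bar>fst x\<bar> + \<bar>snd x\<bar>"
proof -
  have "\<bar>f (ucoord x) - f 0\<bar> \<le> \<bar>ucoord x\<bar>"
    using lipschitz_onD[OF assms, of "ucoord x" 0] by (simp add: dist_real_def)
  then have "\<bar>f (ucoord x) - vcoord x\<bar> \<le> 2 * (\<bar>f 0\<bar> + \<bar>fst x\<bar> + \<bar>snd x\<bar>)"
    by (smt (verit))
  then show ?thesis unfolding graph_gap_def by (simp add: abs_divide)
qed

section \<open>Integrability under finite second moments\<close>

lemma measurable_fst_borel [measurable]:
  "(fst :: 'a::topological_space \<times> 'b::topological_space \<Rightarrow> 'a) \<in> borel \<rightarrow>\<^sub>M borel"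
  by (intro borel_measurable_continuous_onI continuous_intros)

lemma measurable_snd_borel [measurable]:
  "(snd :: 'a::topological_space \<times> 'b::topological_space \<Rightarrow> 'b) \<in> borel \<rightarrow>\<^sub>M borel"
  by (intro borel_measurable_continuous_onI continuous_intros)

lemma P2_integrable:
  fixes g :: "'a::euclidean_space \<Rightarrow> 'b::{banach,second_countable_topology}"
  assumes "P2 M" "g \<in> borel_measurable borel" "\<And>z. norm (g z) \<le> K * (1 + (norm z)\<^sup>2)"
  shows "integrable M g"
proof (rule Bochner_Integration.integrable_bound)
  have M: "finite_measure M" "sets M = sets borel" and sq: "integrable M (\<lambda>z. (norm z)\<^sup>2)"
    using assms(1) prob_space.finite_measure unfolding P2_def by auto
  show "integrable M (\<lambda>z. K * (1 + (norm z)\<^sup>2))"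
    by (intro integrable_mult_right Bochner_Integration.integrable_add
        finite_measure.integrable_const[OF M(1)] sq)
  show "g \<in> borel_measurable M"
    by (subst measurable_cong_sets[OF M(2) refl]) (rule assms(2))
  show "AE z in M. norm (g z) \<le> norm (K * (1 + (norm z)\<^sup>2))"
  proof (rule AE_I2)
    show "norm (g z) \<le> norm (K * (1 + (norm z)\<^sup>2))" for z
      using order.trans[OF assms(3)[of z] abs_ge_self] by simp
  qed
qed

lemma abs_mult_le_quadratic:
  fixes p q a b c d n :: real
  assumes "\<bar>p\<bar> \<le> a + b * n" "\<bar>q\<bar> \<le> c + d * n" "0 \<le> a" "0 \<le> b" "0 \<le> c" "0 \<le> d" "0 \<le> n"
  shows "\<bar>p * q\<bar> \<le> (a + b) * (c + d) * (1 + n\<^sup>2)"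
proof -
  have "0 \<le> (n - 1)\<^sup>2" by simp
  then have n_le: "n \<le> 1 + n\<^sup>2" using \<open>0 \<le> n\<close> by (simp add: power2_diff)
  have "\<bar>p * q\<bar> \<le> (a + b * n) * (c + d * n)"
    unfolding abs_mult using assms by (intro mult_mono) auto
  also have "\<dots> = a * c + (a * d + b * c) * n + b * d * n\<^sup>2"
    by (simp add: algebra_simps power2_eq_square)
  also have "\<dots> \<le> a * c * (1 + n\<^sup>2) + (a * d + b * c) * (1 + n\<^sup>2) + b * d * (1 + n\<^sup>2)"
  proof (intro add_mono)
    show "a * c \<le> a * c * (1 + n\<^sup>2)" using mult_left_mono[of 1 "1 + n\<^sup>2" "a * c"] assms by simp
    show "(a * d + b * c) * n \<le> (a * d + b * c) * (1 + n\<^sup>2)"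
      using assms n_le by (intro mult_left_mono) auto
    show "b * d * n\<^sup>2 \<le> b * d * (1 + n\<^sup>2)" using assms by (intro mult_left_mono) auto
  qed
  also have "\<dots> = (a + b) * (c + d) * (1 + n\<^sup>2)"
    by (simp add: algebra_simps)
  finally show ?thesis .
qed

lemma P2_integrable_mult:
  fixes p q :: "'a::euclidean_space \<Rightarrow> real"
  assumes "P2 M" "p \<in> borel_measurable borel" "q \<in> borel_measurable borel"
    and "\<And>z. \<bar>p z\<bar> \<le> a + b * norm z" "\<And>z. \<bar>q z\<bar> \<le> c + d * norm z"
    and "0 \<le> a" "0 \<le> b" "0 \<le> c" "0 \<le> d"
  shows "integrable M (\<lambda>z. p z * q z)"
proof (rule P2_integrable[OF assms(1), where K = "(a + b) * (c + d)"])
  show "(\<lambda>z. p z * q z) \<in> borel_measurable borel"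
    using assms(2,3) by (rule borel_measurable_times)
  show "norm (p z * q z) \<le> (a + b) * (c + d) * (1 + (norm z)\<^sup>2)" for z
    using abs_mult_le_quadratic[OF assms(4,5) assms(6-9) norm_ge_zero] by simp
qed

lemma abs_coords_le_norm:
  fixes z :: "pt \<times> pt"
  shows "\<bar>fst (fst z)\<bar> \<le> norm z" "\<bar>snd (fst z)\<bar> \<le> norm z"
    "\<bar>fst (snd z)\<bar> \<le> norm z" "\<bar>snd (snd z)\<bar> \<le> norm z"
proof -
  obtain a b c d where z: "z = ((a, b), (c, d))" by (metis prod.collapse)
  have "\<bar>a\<bar> \<le> norm (a, b)" "\<bar>b\<bar> \<le> norm (a, b)" "\<bar>c\<bar> \<le> norm (c, d)" "\<bar>d\<bar> \<le> norm (c, d)"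
    "norm (a, b) \<le> norm z" "norm (c, d) \<le> norm z"
    unfolding z by (metis norm_fst_le norm_snd_le real_norm_def)+
  then show "\<bar>fst (fst z)\<bar> \<le> norm z" "\<bar>snd (fst z)\<bar> \<le> norm z"
    "\<bar>fst (snd z)\<bar> \<le> norm z" "\<bar>snd (snd z)\<bar> \<le> norm z"
    unfolding z by auto
qed

lemma P2_integrable_affine:
  fixes g :: "'a::euclidean_space \<Rightarrow> 'b::{banach,second_countable_topology}"
  assumes "P2 M" "g \<in> borel_measurable borel" "\<And>z. norm (g z) \<le> a + b * norm z" "0 \<le> a" "0 \<le> b"
  shows "integrable M g"
proof (rule P2_integrable[OF assms(1,2), where K = "a + b"])
  fix z
  have "norm (g z) \<le> \<bar>1 * norm (g z)\<bar>" by simp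
  also have "\<dots> \<le> (1 + 0) * (a + b) * (1 + (norm z)\<^sup>2)"
    using assms(3-5) by (intro abs_mult_le_quadratic) auto
  finally show "norm (g z) \<le> (a + b) * (1 + (norm z)\<^sup>2)" by simp
qed

lemma integrable_cost:
  fixes \<zeta> :: "(pt \<times> pt) measure"
  assumes "P2 \<zeta>"
  shows "integrable \<zeta> (\<lambda>z. cost (fst z) (snd z))"
  unfolding cost_def
proof (rule P2_integrable_mult[OF assms])
  show "\<bar>fst (fst z) - fst (snd z)\<bar> \<le> 0 + 2 * norm z" "\<bar>snd (fst z) - snd (snd z)\<bar> \<le> 0 + 2 * norm z"
    for z :: "pt \<times> pt" using abs_coords_le_norm[of z] by (simp_all add: abs_le_iff)
qed auto

lemma integrable_cost_const:
  fixes \<zeta> :: "(pt \<times> pt) measure"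
  assumes "P2 \<zeta>"
  shows "integrable \<zeta> (\<lambda>z. cost r (snd z))"
  unfolding cost_def
proof (rule P2_integrable_mult[OF assms])
  show "\<bar>fst r - fst (snd z)\<bar> \<le> \<bar>fst r\<bar> + 1 * norm z" "\<bar>snd r - snd (snd z)\<bar> \<le> \<bar>snd r\<bar> + 1 * norm z"
    for z :: "pt \<times> pt" using abs_coords_le_norm[of z] by (smt (verit))+
qed auto

lemma
  fixes \<zeta> :: "(pt \<times> pt) measure"
  assumes "P2 \<zeta>" and lip: "1-lipschitz_on UNIV f"
  shows integrable_graph_gap_sq: "integrable \<zeta> (\<lambda>z. (graph_gap f (fst z))\<^sup>2)"
    and integrable_graph_gap_increment:
      "integrable \<zeta> (\<lambda>z. graph_gap f (fst z) * (vcoord (snd z) - vcoord (fst z)))"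
proof -
  have "continuous_on UNIV (\<lambda>z::pt \<times> pt. graph_gap f (fst z))"
    by (rule continuous_on_compose2[OF continuous_on_graph_gap[OF lipschitz_on_continuous_on[OF lip]]])
      (intro continuous_intros, simp)
  then have gap_meas: "(\<lambda>z::pt \<times> pt. graph_gap f (fst z)) \<in> borel_measurable borel"
    by (rule borel_measurable_continuous_onI)
  have gap_bound: "\<bar>graph_gap f (fst z)\<bar> \<le> \<bar>f 0\<bar> + 2 * norm z" for z :: "pt \<times> pt"
    using abs_graph_gap_le[OF lip, of "fst z"] abs_coords_le_norm[of z] by linarith
  show "integrable \<zeta> (\<lambda>z. (graph_gap f (fst z))\<^sup>2)"
    unfolding power2_eq_square
    by (rule P2_integrable_mult[OF assms(1) gap_meas gap_meas gap_bound gap_bound]) auto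
  have "\<bar>vcoord (snd z) - vcoord (fst z)\<bar> \<le> 0 + 4 * norm z" for z :: "pt \<times> pt"
    using abs_coords_le_norm[of z] by (simp add: abs_le_iff)
  moreover have "(\<lambda>z::pt \<times> pt. vcoord (snd z) - vcoord (fst z)) \<in> borel_measurable borel"
    by measurable
  ultimately show "integrable \<zeta> (\<lambda>z. graph_gap f (fst z) * (vcoord (snd z) - vcoord (fst z)))"
    by (intro P2_integrable_mult[OF assms(1) gap_meas _ gap_bound, where c = 0 and d = 4]) auto
qed

section \<open>Martingale couplings\<close>

lemma integrable_indicator_comp_mult:
  fixes e :: "'a \<Rightarrow> real"
  assumes T[measurable]: "T \<in> M \<rightarrow>\<^sub>M N" and A[measurable]: "A \<in> sets N" and e: "integrable M e"
  shows "integrable M (\<lambda>z. indicator A (T z) * e z)"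
proof (rule Bochner_Integration.integrable_bound[OF e])
  have [measurable]: "e \<in> borel_measurable M" using e by (rule borel_measurable_integrable)
  show "(\<lambda>z. indicator A (T z) * e z) \<in> borel_measurable M" by measurable
  show "AE z in M. norm (indicator A (T z) * e z) \<le> norm (e z)"
    by (intro AE_I2) (simp add: indicator_def)
qed

lemma emeasure_distr_density_eq_integral:
  fixes e :: "'a \<Rightarrow> real"
  assumes T[measurable]: "T \<in> M \<rightarrow>\<^sub>M N" and A[measurable]: "A \<in> sets N"
    and e: "integrable M e" "\<And>z. 0 \<le> e z"
  shows "emeasure (distr (density M (\<lambda>z. ennreal (e z))) N T) A
    = ennreal (\<integral>z. indicator A (T z) * e z \<partial>M)"
proof -
  have [measurable]: "e \<in> borel_measurable M" using e(1) by (rule borel_measurable_integrable)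
  have "emeasure (distr (density M (\<lambda>z. ennreal (e z))) N T) A
      = (\<integral>\<^sup>+z. ennreal (e z) * indicator (T -` A \<inter> space M) z \<partial>M)"
    by (simp add: emeasure_distr emeasure_density)
  also have "\<dots> = (\<integral>\<^sup>+z. ennreal (indicator A (T z) * e z) \<partial>M)"
    by (intro nn_integral_cong) (simp add: indicator_def)
  also have "\<dots> = ennreal (\<integral>z. indicator A (T z) * e z \<partial>M)"
    using integrable_indicator_comp_mult[OF T A e(1)] e(2) by (intro nn_integral_eq_integral) auto
  finally show ?thesis .
qed

text \<open>
  The hypothesis says that the images under \<open>T\<close> of the measures with densities \<open>max 0 g\<close> and
  \<open>max 0 (- g)\<close> agree, so \<open>h\<close> has the same integral against both.
\<close>
lemma integral_mult_eq_0_if_indicator_integrals_eq_0: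
  fixes g :: "'a \<Rightarrow> real" and h :: "'b \<Rightarrow> real"
  assumes T[measurable]: "T \<in> M \<rightarrow>\<^sub>M N" and g: "integrable M g"
    and h[measurable]: "h \<in> borel_measurable N" and hg: "integrable M (\<lambda>z. h (T z) * g z)"
    and ind: "\<And>A. A \<in> sets N \<Longrightarrow> (\<integral>z. indicator A (T z) * g z \<partial>M) = 0"
  shows "(\<integral>z. h (T z) * g z \<partial>M) = 0"
proof -
  have [measurable]: "g \<in> borel_measurable M" using g by (rule borel_measurable_integrable)
  define gp where "gp z = max 0 (g z)" for z
  define gn where "gn z = max 0 (- g z)" for z
  have parts_meas[measurable]: "gp \<in> borel_measurable M" "gn \<in> borel_measurable M"
    unfolding gp_def gn_def by measurable
  have parts: "integrable M gp" "integrable M gn" "\<And>z. \<bar>gp z\<bar> \<le> \<bar>g z\<bar>" "\<And>z. \<bar>gn z\<bar> \<le> \<bar>g z\<bar>"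
    "\<And>z. 0 \<le> gp z" "\<And>z. 0 \<le> gn z" "\<And>z. g z = gp z - gn z"
    unfolding gp_def gn_def using g by auto
  have same_image:
    "distr (density M (\<lambda>z. ennreal (gp z))) N T = distr (density M (\<lambda>z. ennreal (gn z))) N T"
  proof (rule measure_eqI)
    fix A assume "A \<in> sets (distr (density M (\<lambda>z. ennreal (gp z))) N T)"
    then have A[measurable]: "A \<in> sets N" by simp
    have "(\<integral>z. indicator A (T z) * gp z \<partial>M) - (\<integral>z. indicator A (T z) * gn z \<partial>M)
        = (\<integral>z. indicator A (T z) * g z \<partial>M)"
      using integrable_indicator_comp_mult[OF T A parts(1)] integrable_indicator_comp_mult[OF T A parts(2)]
      by (subst Bochner_Integration.integral_diff[symmetric]) (auto simp: parts(7) algebra_simps)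
    then show "emeasure (distr (density M (\<lambda>z. ennreal (gp z))) N T) A
        = emeasure (distr (density M (\<lambda>z. ennreal (gn z))) N T) A"
      using ind[OF A] parts by (simp add: emeasure_distr_density_eq_integral)
  qed simp
  have "integral\<^sup>L (distr (density M (\<lambda>z. ennreal (e z))) N T) h = (\<integral>z. e z * h (T z) \<partial>M)"
    if [measurable]: "e \<in> borel_measurable M" and "\<And>z. 0 \<le> e z" for e
    using that(2) by (simp add: integral_distr integral_density)
  then have parts_eq: "(\<integral>z. gp z * h (T z) \<partial>M) = (\<integral>z. gn z * h (T z) \<partial>M)"
    by (metis parts_meas parts(5,6) same_image)
  have int_parts: "integrable M (\<lambda>z. e z * h (T z))"
    if [measurable]: "e \<in> borel_measurable M" and "\<And>z. \<bar>e z\<bar> \<le> \<bar>g z\<bar>" for e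
  proof (rule Bochner_Integration.integrable_bound[OF hg])
    show "(\<lambda>z. e z * h (T z)) \<in> borel_measurable M" by measurable
    show "AE z in M. norm (e z * h (T z)) \<le> norm (h (T z) * g z)"
    proof (rule AE_I2)
      show "norm (e z * h (T z)) \<le> norm (h (T z) * g z)" for z
        using mult_right_mono[OF that(2)[of z] abs_ge_zero[of "h (T z)"]] by (simp add: abs_mult mult.commute)
    qed
  qed
  have "(\<integral>z. h (T z) * g z \<partial>M) = (\<integral>z. gp z * h (T z) - gn z * h (T z) \<partial>M)"
    by (rule Bochner_Integration.integral_cong) (auto simp: parts(7) algebra_simps)
  also have "\<dots> = (\<integral>z. gp z * h (T z) \<partial>M) - (\<integral>z. gn z * h (T z) \<partial>M)"
    using int_parts parts(3,4) by (intro Bochner_Integration.integral_diff) auto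
  finally show ?thesis using parts_eq by simp
qed

lemma GammaD:
  assumes "\<zeta> \<in> Gamma \<nu>"
  shows "P2 \<zeta>" "sets \<zeta> = sets borel" "distr \<zeta> borel snd = \<nu>"
    "\<And>A. A \<in> sets borel \<Longrightarrow> (\<integral>z. indicator A (fst z) *\<^sub>R (snd z - fst z) \<partial>\<zeta>) = 0"
  using assms unfolding Gamma_def P2_def by auto

lemma Gamma_integral_increment_eq_0:
  fixes h :: "pt \<Rightarrow> real"
  assumes Z: "\<zeta> \<in> Gamma \<nu>" and h: "h \<in> borel_measurable borel"
    and hi: "integrable \<zeta> (\<lambda>z. h (fst z) * (vcoord (snd z) - vcoord (fst z)))"
  shows "(\<integral>z. h (fst z) * (vcoord (snd z) - vcoord (fst z)) \<partial>\<zeta>) = 0"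
proof (rule integral_mult_eq_0_if_indicator_integrals_eq_0[OF _ _ h hi])
  note \<zeta> = GammaD[OF Z]
  have norm_increment: "norm (snd z - fst z) \<le> 0 + 2 * norm z" for z :: "pt \<times> pt"
    using norm_triangle_ineq4[of "snd z" "fst z"] norm_fst_le[of "fst z" "snd z"]
      norm_snd_le[of "snd z" "fst z"] by simp
  show "fst \<in> \<zeta> \<rightarrow>\<^sub>M borel"
    by (subst measurable_cong_sets[OF \<zeta>(2) refl]) measurable
  show "integrable \<zeta> (\<lambda>z. vcoord (snd z) - vcoord (fst z))"
  proof (rule P2_integrable_affine[OF \<zeta>(1), where a = 0 and b = 4])
    show "norm (vcoord (snd z) - vcoord (fst z)) \<le> 0 + 4 * norm z" for z
      using abs_coords_le_norm[of z] by (simp add: abs_le_iff)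
  qed auto
  fix A :: "pt set" assume [measurable]: "A \<in> sets borel"
  have "integrable \<zeta> (\<lambda>z. indicator A (fst z) *\<^sub>R (snd z - fst z))"
    using norm_increment
    by (intro P2_integrable_affine[OF \<zeta>(1), where a = 0 and b = 2])
      (auto simp: indicator_def intro: order.trans)
  then have "(\<integral>z. (\<lambda>p. snd p - fst p) (indicator A (fst z) *\<^sub>R (snd z - fst z)) \<partial>\<zeta>) = 0"
    using \<zeta>(4)[of A] by (subst integral_bounded_linear)
      (auto intro: bounded_linear_sub bounded_linear_fst bounded_linear_snd)
  then show "(\<integral>z. indicator A (fst z) * (vcoord (snd z) - vcoord (fst z)) \<partial>\<zeta>) = 0"
    by (simp add: algebra_simps)
qed

section \<open>The duality estimate\<close>

lemma INF_Rats_eq_INF: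
  fixes F :: "real \<Rightarrow> real"
  assumes "continuous_on UNIV F"
  shows "(INF t\<in>\<rat>. ereal (F t)) = (INF t. ereal (F t))"
proof (rule antisym)
  show "(INF t. ereal (F t)) \<le> (INF t\<in>\<rat>. ereal (F t))" by (rule INF_superset_mono) auto
next
  define a where "a = (INF t\<in>\<rat>. ereal (F t))"
  have "a \<le> ereal (F t)" for t
  proof (cases a)
    case (real b)
    have "closed {t. b \<le> F t}" using assms by (intro closed_Collect_le) (auto intro: continuous_intros)
    moreover have "\<rat> \<subseteq> {t. b \<le> F t}"
    proof
      fix q :: real assume "q \<in> \<rat>"
      then have "a \<le> ereal (F q)" unfolding a_def by (rule INF_lower)
      then show "q \<in> {t. b \<le> F t}" using real by simp
    qed
    ultimately have "closure \<rat> \<subseteq> {t. b \<le> F t}" by (rule closure_minimal[rotated])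
    then show ?thesis using real Rats_closure_real by auto
  next
    case PInf
    have "a \<le> ereal (F 0)" unfolding a_def by (rule INF_lower) simp
    then show ?thesis using PInf by simp
  qed simp
  then show "a \<le> (INF t. ereal (F t))" by (simp add: le_INF_iff)
qed

lemma borel_measurable_phi_range:
  fixes P :: "real \<Rightarrow> pt"
  assumes "continuous_on UNIV P"
  shows "phi (range P) \<in> borel_measurable borel"
proof -
  have "continuous_on UNIV (\<lambda>t. cost (P t) y)" for y
    unfolding cost_def by (intro continuous_intros assms)
  then have "phi (range P) = (\<lambda>y. INF t\<in>\<rat>. ereal (cost (P t) y))"
    unfolding phi_def image_image by (simp add: INF_Rats_eq_INF)
  moreover have "(\<lambda>y. ereal (cost x y)) \<in> borel_measurable borel" for x
    unfolding cost_def by (intro borel_measurable_continuous_onI continuous_intros)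
  ultimately show ?thesis
    by (simp add: borel_measurable_INF countable_rat)
qed

lemma graph_eq_range: "{p. vcoord p = f (ucoord p)} = range (\<lambda>t. ((t - f t) / 2, (t + f t) / 2))"
proof safe
  fix a b :: real assume "vcoord (a, b) = f (ucoord (a, b))"
  then have "(a, b) = ((a + b - f (a + b)) / 2, (a + b + f (a + b)) / 2)" by (auto simp: field_simps)
  then show "(a, b) \<in> range (\<lambda>t. ((t - f t) / 2, (t + f t) / 2))" by blast
qed (simp add: field_simps)

lemma ext_integral_distr_le:
  fixes \<phi> :: "'b \<Rightarrow> ereal" and g :: "'a \<Rightarrow> real"
  assumes T[measurable]: "T \<in> M \<rightarrow>\<^sub>M N" and \<phi>[measurable]: "\<phi> \<in> borel_measurable N"
    and g: "integrable M g" and le: "\<And>z. \<phi> (T z) \<le> ereal (g z)"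
  shows "ext_integral (distr M N T) \<phi> \<le> ereal (\<integral>z. g z \<partial>M)"
proof -
  define A where "A = (\<integral>\<^sup>+z. ennreal (g z) \<partial>M)"
  define B where "B = (\<integral>\<^sup>+z. ennreal (- g z) \<partial>M)"
  have "(\<integral>\<^sup>+z. e2ennreal (\<phi> (T z)) \<partial>M) \<le> A" unfolding A_def
    by (rule nn_integral_mono) (metis e2ennreal_mono le e2ennreal_ereal)
  moreover have "B \<le> (\<integral>\<^sup>+z. e2ennreal (- \<phi> (T z)) \<partial>M)" unfolding B_def
  proof (rule nn_integral_mono)
    fix z
    have "- ereal (g z) \<le> - \<phi> (T z)" using le[of z] by (simp only: ereal_minus_le_minus)
    then show "ennreal (- g z) \<le> e2ennreal (- \<phi> (T z))" by (metis e2ennreal_mono e2ennreal_ereal uminus_ereal.simps(1))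
  qed
  ultimately have "ext_integral (distr M N T) \<phi> \<le> enn2ereal A - enn2ereal B"
    unfolding ext_integral_def by (simp add: nn_integral_distr ereal_minus_mono less_eq_ennreal.rep_eq[symmetric])
  also have "\<dots> = ereal (\<integral>z. g z \<partial>M)"
  proof -
    have finite: "enn2ereal C = ereal (enn2real C)" if "C \<noteq> \<top>" for C :: ennreal
      using that by (metis enn2ereal_ennreal enn2real_nonneg ennreal_enn2real top.not_eq_extremum)
    show ?thesis
      using integrableD(2,3)[OF g] unfolding A_def B_def real_lebesgue_integral_def[OF g]
      by (simp add: finite)
  qed
  finally show ?thesis .
qed

lemma phi_integral_le:
  assumes lip: "1-lipschitz_on UNIV f" and G: "G = {p. vcoord p = f (ucoord p)}"
    and Z: "\<zeta> \<in> Gamma \<nu>" and k: "integrable \<zeta> k"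
    and le: "\<And>z. phi G (snd z) \<le> ereal (cost (graph_proj f (fst z)) (snd z) - k z)"
  shows "ext_integral \<nu> (phi G) \<le> ereal ((\<integral>z. cost (fst z) (snd z) \<partial>\<zeta>)
           - (\<integral>z. (graph_gap f (fst z))\<^sup>2 \<partial>\<zeta>) - (\<integral>z. k z \<partial>\<zeta>))"
proof -
  note \<zeta> = GammaD[OF Z]
  note integrable = integrable_cost[OF \<zeta>(1)] integrable_graph_gap_sq[OF \<zeta>(1) lip]
    integrable_graph_gap_increment[OF \<zeta>(1) lip] k
  have "ext_integral \<nu> (phi G) \<le> ereal (\<integral>z. cost (fst z) (snd z) - (graph_gap f (fst z))\<^sup>2
      + graph_gap f (fst z) * (vcoord (snd z) - vcoord (fst z)) - k z \<partial>\<zeta>)"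
    unfolding \<zeta>(3)[symmetric]
  proof (rule ext_integral_distr_le)
    show "snd \<in> \<zeta> \<rightarrow>\<^sub>M borel" by (subst measurable_cong_sets[OF \<zeta>(2) refl]) measurable
    show "phi G \<in> borel_measurable borel"
      unfolding G graph_eq_range using lipschitz_on_continuous_on[OF lip]
      by (intro borel_measurable_phi_range continuous_intros) auto
    show "phi G (snd z) \<le> ereal (cost (fst z) (snd z) - (graph_gap f (fst z))\<^sup>2
        + graph_gap f (fst z) * (vcoord (snd z) - vcoord (fst z)) - k z)" for z
      using le[of z] by (simp add: cost_graph_proj)
  qed (use integrable in auto)
  also have "(\<integral>z. cost (fst z) (snd z) - (graph_gap f (fst z))\<^sup>2
      + graph_gap f (fst z) * (vcoord (snd z) - vcoord (fst z)) - k z \<partial>\<zeta>)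
    = (\<integral>z. cost (fst z) (snd z) \<partial>\<zeta>) - (\<integral>z. (graph_gap f (fst z))\<^sup>2 \<partial>\<zeta>)
      + (\<integral>z. graph_gap f (fst z) * (vcoord (snd z) - vcoord (fst z)) \<partial>\<zeta>) - (\<integral>z. k z \<partial>\<zeta>)"
    using integrable by simp
  also have "(\<integral>z. graph_gap f (fst z) * (vcoord (snd z) - vcoord (fst z)) \<partial>\<zeta>) = 0"
    using continuous_on_graph_gap[OF lipschitz_on_continuous_on[OF lip]]
    by (intro Gamma_integral_increment_eq_0[OF Z _ integrable(3)] borel_measurable_continuous_onI)
  finally show ?thesis by simp
qed

lemma msupport_subset_closed:
  assumes "closed C" "sets M = sets borel" "AE x in M. x \<in> C"
  shows "msupport M \<subseteq> C"
proof
  fix x assume x: "x \<in> msupport M"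
  have "emeasure M (- C) = 0"
    using assms by (subst AE_iff_measurable[symmetric, where P = "\<lambda>x. x \<in> C"])
      (auto dest: sets_eq_imp_space_eq)
  then show "x \<in> C"
    using x \<open>closed C\<close> unfolding msupport_def by (auto simp: open_Compl)
qed

lemma phi_le_cost_graph_proj:
  assumes "G = {p. vcoord p = f (ucoord p)}"
  shows "phi G y \<le> ereal (cost (graph_proj f x) y)"
  unfolding phi_def using graph_proj_in_graph assms by (intro INF_lower) auto

lemma optimal_if_cost_integral_le_phi_integral:
  assumes lip: "1-lipschitz_on UNIV f" and G: "G = {p. vcoord p = f (ucoord p)}"
    and \<gamma>: "\<gamma> \<in> Gamma \<nu>"
    and le: "ereal (\<integral>z. cost (fst z) (snd z) \<partial>\<gamma>) \<le> ext_integral \<nu> (phi G)"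
  shows "ereal (\<integral>z. cost (fst z) (snd z) \<partial>\<gamma>) = ext_integral \<nu> (phi G)"
    and "\<forall>\<zeta>\<in>Gamma \<nu>. (\<integral>z. cost (fst z) (snd z) \<partial>\<gamma>) \<le> (\<integral>z. cost (fst z) (snd z) \<partial>\<zeta>)"
    and "AE z in \<gamma>. graph_gap f (fst z) = 0"
proof -
  let ?C = "\<lambda>\<zeta>. \<integral>z. cost (fst z) (snd z) \<partial>\<zeta>"
  let ?D = "\<lambda>\<zeta>. \<integral>z. (graph_gap f (fst z))\<^sup>2 \<partial>\<zeta>"
  have dual: "ext_integral \<nu> (phi G) \<le> ereal (?C \<zeta> - ?D \<zeta>)" if "\<zeta> \<in> Gamma \<nu>" for \<zeta>
    using phi_integral_le[OF lip G that, of "\<lambda>_. 0"] phi_le_cost_graph_proj[OF G] by simp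
  have D_nonneg: "0 \<le> ?D \<zeta>" for \<zeta> by simp
  have "?C \<gamma> \<le> ?C \<gamma> - ?D \<gamma>" using order.trans[OF le dual[OF \<gamma>]] by simp
  then have D_0: "?D \<gamma> = 0" using D_nonneg[of \<gamma>] by linarith
  show "ereal (?C \<gamma>) = ext_integral \<nu> (phi G)"
    using le dual[OF \<gamma>] D_0 by (auto intro: antisym)
  show "\<forall>\<zeta>\<in>Gamma \<nu>. ?C \<gamma> \<le> ?C \<zeta>"
    using order.trans[OF le dual] D_nonneg by (smt (verit) ereal_less_eq(3))
  have "AE z in \<gamma>. (graph_gap f (fst z))\<^sup>2 = 0"
    using D_0 integral_nonneg_eq_0_iff_AE[OF integrable_graph_gap_sq[OF GammaD(1)[OF \<gamma>] lip]] by simp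
  then show "AE z in \<gamma>. graph_gap f (fst z) = 0" by simp
qed

lemma AE_cost_le_cost_of_graph_point:
  assumes lip: "1-lipschitz_on UNIV f" and G: "G = {p. vcoord p = f (ucoord p)}"
    and \<gamma>: "\<gamma> \<in> Gamma \<nu>"
    and le: "ereal (\<integral>z. cost (fst z) (snd z) \<partial>\<gamma>) \<le> ext_integral \<nu> (phi G)"
    and gap_0: "AE z in \<gamma>. graph_gap f (fst z) = 0" and r: "r \<in> G"
  shows "AE z in \<gamma>. cost (fst z) (snd z) \<le> cost r (snd z)"
proof -
  note \<gamma>' = GammaD[OF \<gamma>]
  define k where "k z = max 0 (cost (graph_proj f (fst z)) (snd z) - cost r (snd z))" for z
  have k_int: "integrable \<gamma> k"
    unfolding k_def cost_graph_proj
    using integrable_cost[OF \<gamma>'(1)] integrable_graph_gap_sq[OF \<gamma>'(1) lip]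
      integrable_graph_gap_increment[OF \<gamma>'(1) lip] integrable_cost_const[OF \<gamma>'(1)]
    by auto
  \<comment> \<open>Replacing the projection by \<open>r\<close> wherever \<open>r\<close> is cheaper keeps the estimate of \<open>phi_integral_le\<close> valid.\<close>
  have "phi G (snd z) \<le> ereal (cost (graph_proj f (fst z)) (snd z) - k z)" for z
    using phi_le_cost_graph_proj[OF G] INF_lower[OF r, of "\<lambda>x. ereal (cost x (snd z))"]
    unfolding k_def phi_def by (auto simp: max_def)
  from order.trans[OF le phi_integral_le[OF lip G \<gamma> k_int this]]
  have "(\<integral>z. k z \<partial>\<gamma>) \<le> - (\<integral>z. (graph_gap f (fst z))\<^sup>2 \<partial>\<gamma>)" by simp
  moreover have "0 \<le> (\<integral>z. (graph_gap f (fst z))\<^sup>2 \<partial>\<gamma>)" by simp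
  ultimately have "(\<integral>z. k z \<partial>\<gamma>) \<le> 0" by linarith
  moreover have "0 \<le> (\<integral>z. k z \<partial>\<gamma>)" unfolding k_def by simp
  ultimately have "AE z in \<gamma>. k z = 0"
    using integral_nonneg_eq_0_iff_AE[OF k_int] unfolding k_def by simp
  then show ?thesis
    using gap_0 by eventually_elim (simp add: k_def cost_graph_proj)
qed

lemma closed_graph:
  assumes "continuous_on UNIV f"
  shows "closed {p. vcoord p = f (ucoord p)}"
  by (intro closed_Collect_eq continuous_intros continuous_on_compose2[OF assms]) auto

lemma phi_eq_cost_if_minimizer:
  assumes "x \<in> G" "\<forall>s\<in>G. cost x y \<le> cost s y"
  shows "phi G y = ereal (cost x y)"
  unfolding phi_def using assms by (intro antisym INF_lower INF_greatest) auto

lemma msupport_if_cost_integral_le_phi_integral: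
  assumes lip: "1-lipschitz_on UNIV f" and G: "G = {p. vcoord p = f (ucoord p)}"
    and \<gamma>: "\<gamma> \<in> Gamma \<nu>"
    and le: "ereal (\<integral>z. cost (fst z) (snd z) \<partial>\<gamma>) \<le> ext_integral \<nu> (phi G)"
  shows "msupport (distr \<gamma> borel fst) \<subseteq> G"
    and "\<And>x y. (x, y) \<in> msupport \<gamma> \<Longrightarrow> x \<in> G \<and> (\<forall>s\<in>G. cost x y \<le> cost s y)"
proof -
  note sets_\<gamma> = GammaD(2)[OF \<gamma>]
  note gap_0 = optimal_if_cost_integral_le_phi_integral(3)[OF lip G \<gamma> le]
  have "closed G" unfolding G by (rule closed_graph[OF lipschitz_on_continuous_on[OF lip]])
  have AE_in_G: "AE z in \<gamma>. fst z \<in> G"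
    using gap_0 unfolding G graph_gap_eq_0_iff by simp
  have "fst \<in> \<gamma> \<rightarrow>\<^sub>M borel" by (subst measurable_cong_sets[OF sets_\<gamma> refl]) measurable
  then show "msupport (distr \<gamma> borel fst) \<subseteq> G"
    using AE_in_G \<open>closed G\<close> by (intro msupport_subset_closed) (auto simp: AE_distr_iff)
  have "msupport \<gamma> \<subseteq> fst -` G"
    using AE_in_G sets_\<gamma> closed_vimage_fst[OF \<open>closed G\<close>] by (intro msupport_subset_closed) auto
  moreover have "msupport \<gamma> \<subseteq> {z. cost (fst z) (snd z) \<le> cost r (snd z)}" if "r \<in> G" for r
  proof (rule msupport_subset_closed[OF _ sets_\<gamma>])
    show "closed {z::pt \<times> pt. cost (fst z) (snd z) \<le> cost r (snd z)}"
      unfolding cost_def by (intro closed_Collect_le continuous_intros)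
  qed (use AE_cost_le_cost_of_graph_point[OF lip G \<gamma> le gap_0 that] in simp)
  ultimately show "x \<in> G \<and> (\<forall>s\<in>G. cost x y \<le> cost s y)" if "(x, y) \<in> msupport \<gamma>" for x y
    using that by force
qed

theorem lemma8:
  fixes \<nu> :: "pt measure" and \<gamma> :: "(pt \<times> pt) measure" and G :: "pt set"
  assumes "P2 \<nu>"
    and "\<gamma> \<in> Gamma \<nu>"
    and "maximal_monotone G"
    and "ereal (\<integral>z. cost (fst z) (snd z) \<partial>\<gamma>) \<le> ext_integral \<nu> (phi G)"
  shows "ereal (\<integral>z. cost (fst z) (snd z) \<partial>\<gamma>) = ext_integral \<nu> (phi G)
    \<and> (\<forall>\<zeta>\<in>Gamma \<nu>. (\<integral>z. cost (fst z) (snd z) \<partial>\<gamma>) \<le> (\<integral>z. cost (fst z) (snd z) \<partial>\<zeta>))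
    \<and> msupport (distr \<gamma> borel fst) \<subseteq> G
    \<and> (\<forall>(x, y) \<in> msupport \<gamma>. ereal (cost x y) = phi G y \<and>
           (\<exists>r\<in>G. (\<forall>s\<in>G. cost r y \<le> cost s y) \<and> cost r y = cost x y))"
proof -
  obtain f where lip: "1-lipschitz_on UNIV f" and G: "G = {p. vcoord p = f (ucoord p)}"
    using maximal_monotone_graph[OF assms(3)] .
  note optimal = optimal_if_cost_integral_le_phi_integral[OF lip G assms(2,4)]
  note support = msupport_if_cost_integral_le_phi_integral[OF lip G assms(2,4)]
  have "ereal (cost x y) = phi G y \<and> (\<exists>r\<in>G. (\<forall>s\<in>G. cost r y \<le> cost s y) \<and> cost r y = cost x y)"
    if "(x, y) \<in> msupport \<gamma>" for x y
    using support(2)[OF that] phi_eq_cost_if_minimizer[of x G y] by auto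
  then show ?thesis
    using optimal(1,2) support(1) by auto
qed

end
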